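(* Let $X$ be a CAT(0) space, $T_n:X\to X$ for $n\in\mathbb{N}$, and $(\gamma_n)$ a sequence of positive reals such that $(T_n)$ is jointly $(P_2)$ with respect to $(\gamma_n)$. Then for all $m,n\in\mathbb{N}$ and all $w\in X$, $d(T_nw,T_mw)\le\frac{|\gamma_n-\gamma_m|}{\gamma_n}d(w,T_nw)$.
   Context: A geodesic space $(X,d)$ is CAT(0) if for all $z\in X$, all geodesics $\gamma:[a,b]\to X$ and all $t\in[0,1]$, $d^2(z,\gamma((1-t)a+tb))\le(1-t)d^2(z,\gamma(a))+td^2(z,\gamma(b))-t(1-t)d^2(\gamma(a),\gamma(b))$. The family $(T_n)$ is jointly $(P_2)$ with respect to $(\gamma_n)$ if for all $n,m\in\mathbb{N}$ and $x,y\in X$, $\frac1{\gamma_m}\big(d^2(T_nx,T_my)+d^2(y,T_my)-d^2(y,T_nx)\big)\le\frac1{\gamma_n}\big(d^2(x,T_my)-d^2(x,T_nx)-d^2(T_nx,T_my)\big)$. *)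

theory Defs
  imports "HOL-Analysis.Analysis"
begin

definition geodesic :: "(real \<Rightarrow> 'a::metric_space) \<Rightarrow> real \<Rightarrow> real \<Rightarrow> bool" where
  "geodesic g a b \<longleftrightarrow> a \<le> b \<and> (\<forall>s\<in>{a..b}. \<forall>t\<in>{a..b}. dist (g s) (g t) = \<bar>s - t\<bar>)"

definition geodesic_space :: "'a::metric_space itself \<Rightarrow> bool" where
  "geodesic_space _ \<longleftrightarrow> (\<forall>x y :: 'a. \<exists>g a b. geodesic g a b \<and> g a = x \<and> g b = y)"

definition CAT0 :: "'a::metric_space itself \<Rightarrow> bool" where
  "CAT0 X \<longleftrightarrow> geodesic_space X \<and>
     (\<forall>(z::'a) g a b (t::real). geodesic g a b \<longrightarrow> 0 \<le> t \<longrightarrow> t \<le> 1 \<longrightarrow>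
        (dist z (g ((1 - t) * a + t * b)))\<^sup>2
          \<le> (1 - t) * (dist z (g a))\<^sup>2 + t * (dist z (g b))\<^sup>2 - t * (1 - t) * (dist (g a) (g b))\<^sup>2)"

definition jointly_P2 :: "(nat \<Rightarrow> 'a::metric_space \<Rightarrow> 'a) \<Rightarrow> (nat \<Rightarrow> real) \<Rightarrow> bool" where
  "jointly_P2 T \<gamma> \<longleftrightarrow> (\<forall>n m x y.
     (1 / \<gamma> m) * ((dist (T n x) (T m y))\<^sup>2 + (dist y (T m y))\<^sup>2 - (dist y (T n x))\<^sup>2)
       \<le> (1 / \<gamma> n) * ((dist x (T m y))\<^sup>2 - (dist x (T n x))\<^sup>2 - (dist (T n x) (T m y))\<^sup>2))"

end

theory Submission
  imports Defs
begin

text \<open>Taking \<open>x = y = w\<close> in the joint \<open>(P\<^sub>2)\<close> inequality leaves a quadratic relation between the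
  three sides of the triangle \<open>w, T\<^sub>n w, T\<^sub>m w\<close>; the triangle inequality then bounds the side
  \<open>d(T\<^sub>n w, T\<^sub>m w)\<close>.\<close>

lemma jointly_P2_same_point:
  assumes "jointly_P2 T \<gamma>" and "\<gamma> m > 0" and "\<gamma> n > 0"
  shows "(\<gamma> n + \<gamma> m) * (dist (T n w) (T m w))\<^sup>2
           \<le> (\<gamma> m - \<gamma> n) * ((dist w (T m w))\<^sup>2 - (dist w (T n w))\<^sup>2)"
proof -
  define a where "a = dist (T n w) (T m w)"
  define b where "b = dist w (T m w)"
  define c where "c = dist w (T n w)"
  have "(1 / \<gamma> m) * (a\<^sup>2 + b\<^sup>2 - c\<^sup>2) \<le> (1 / \<gamma> n) * (b\<^sup>2 - c\<^sup>2 - a\<^sup>2)"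
    using assms(1) unfolding jointly_P2_def a_def b_def c_def by (metis dist_commute)
  then have "\<gamma> n * (a\<^sup>2 + b\<^sup>2 - c\<^sup>2) \<le> \<gamma> m * (b\<^sup>2 - c\<^sup>2 - a\<^sup>2)"
    using assms(2,3) by (simp add: field_simps)
  then show ?thesis
    unfolding a_def [symmetric] b_def [symmetric] c_def [symmetric] by (simp add: algebra_simps)
qed

lemma dist_le_of_weighted_square_ineq:
  fixes p q w :: "'a::metric_space" and \<alpha> \<beta> :: real
  assumes "\<alpha> > 0" and "\<beta> > 0"
    and ineq: "(\<beta> + \<alpha>) * (dist p q)\<^sup>2 \<le> (\<alpha> - \<beta>) * ((dist w q)\<^sup>2 - (dist w p)\<^sup>2)"
  shows "dist p q \<le> \<bar>\<beta> - \<alpha>\<bar> / \<beta> * dist w p"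
proof -
  define a where "a = dist p q"
  define b where "b = dist w q"
  define c where "c = dist w p"
  have b_le: "b \<le> a + c" and c_le: "c \<le> a + b" and a_le: "a \<le> b + c"
    unfolding a_def b_def c_def by (metis dist_commute dist_triangle)+
  have "a \<ge> 0" "b \<ge> 0" "c \<ge> 0" unfolding a_def b_def c_def by simp_all
  have "\<beta> * a * a \<le> \<bar>\<beta> - \<alpha>\<bar> * c * a"
  proof (cases "\<alpha> \<ge> \<beta>")
    case True
    have "b\<^sup>2 \<le> (a + c)\<^sup>2" using b_le \<open>b \<ge> 0\<close> by (rule power_mono)
    then have "(\<alpha> - \<beta>) * (b\<^sup>2 - c\<^sup>2) \<le> (\<alpha> - \<beta>) * (a\<^sup>2 + 2 * a * c)"
      using True by (intro mult_left_mono) (auto simp: power2_eq_square algebra_simps)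
    with ineq True show ?thesis
      unfolding a_def [symmetric] b_def [symmetric] c_def [symmetric]
      by (simp add: power2_eq_square algebra_simps)
  next
    case False
    have "(c - a)\<^sup>2 \<le> b\<^sup>2" using c_le a_le \<open>b \<ge> 0\<close> by (simp add: power2_le_iff_abs_le)
    then have "(\<beta> - \<alpha>) * (c\<^sup>2 - b\<^sup>2) \<le> (\<beta> - \<alpha>) * (2 * a * c - a\<^sup>2)"
      using False by (intro mult_left_mono) (auto simp: power2_eq_square algebra_simps)
    with ineq False show ?thesis
      unfolding a_def [symmetric] b_def [symmetric] c_def [symmetric]
      by (simp add: power2_eq_square algebra_simps)
  qed
  then have "\<beta> * a \<le> \<bar>\<beta> - \<alpha>\<bar> * c"
    using \<open>a \<ge> 0\<close> \<open>c \<ge> 0\<close> by (cases "a = 0") (auto simp: mult_le_cancel_right)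
  then show ?thesis using \<open>\<beta> > 0\<close> unfolding a_def c_def by (simp add: field_simps)
qed

theorem proposition3p10:
  fixes T :: "nat \<Rightarrow> 'a::metric_space \<Rightarrow> 'a" and \<gamma> :: "nat \<Rightarrow> real"
  assumes "CAT0 TYPE('a)"
    and "\<And>n. \<gamma> n > 0"
    and "jointly_P2 T \<gamma>"
  shows "\<forall>m n (w::'a). dist (T n w) (T m w) \<le> \<bar>\<gamma> n - \<gamma> m\<bar> / \<gamma> n * dist w (T n w)"
  using dist_le_of_weighted_square_ineq[OF assms(2) assms(2) jointly_P2_same_point[OF assms(3)]]
    assms(2) by blast

end
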